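(* Let $S$ be a finite set of $N$ elements and let $n$ be a power of $2$. Consider the knockout tournament among $n$ elements on $S$ described in the context. Then the winner of the tournament is small with probability at least $1-2^{-(n+1)}$.
   Context: Elements of $S$ are totally ordered but accessible only through comparisons; each comparison of two distinct elements reports the wrong relation with probability at most $p$, for a fixed constant $p\in[0,\tfrac12)$, independently of all other comparisons (copies of the same element are treated as distinct with a consistent tie-breaking order). An element is small if its rank in $S$ is at most $\frac34 N$. Let $c_p$ be a positive integer such that, for every $t\ge0$ with $2c_pt$ integer, the majority of $2c_pt+1$ independent comparisons of two distinct elements is correct with probability at least $1-e^{-t}$ (such a constant exists, e.g. $c_p=\lceil 4(1-p)/(1-2p)^2\rceil$). The tournament among $n$ elements: first form $S_n$ by sampling $n$ elements from $S$ uniformly at random with replacement. For $i=1,\dots,\log_2 n$, the elements of $S_{n/2^{i-1}}$ are split (without replacement) into $n/2^i$ pairs, and each pair $x,y$ plays a match consisting of $2c_p\lceil 2^i\rceil+5$ comparisons between $x$ and $y$; the winner of the match is the element reported smaller by the majority of these comparisons, and the winners form $S_{n/2^i}$. The unique element of $S_1$ is the winner of the tournament. *)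

theory Defs
  imports "HOL-Probability.Probability"
begin

(* Copies of elements: (value, sample slot). True order: by value, ties broken
   consistently by slot index. *)
definition copy_less :: "('a::linorder \<times> nat) \<Rightarrow> ('a \<times> nat) \<Rightarrow> bool" where
  "copy_less x y \<longleftrightarrow> fst x < fst y \<or> (fst x = fst y \<and> snd x < snd y)"

(* Rank of x in S (number of elements of S strictly below x, i.e. 0-based) *)
definition rank :: "'a::linorder set \<Rightarrow> 'a \<Rightarrow> nat" where
  "rank S x = card {y \<in> S. y < x}"

definition small :: "'a::linorder set \<Rightarrow> 'a \<Rightarrow> bool" where
  "small S x \<longleftrightarrow> real (rank S x) \<le> 3/4 * real (card S)"

(* number of wrong answers among m independent comparisons,
   the k-th one being wrong with probability e k *)
primrec errs_pmf :: "(nat \<Rightarrow> real) \<Rightarrow> nat \<Rightarrow> nat pmf" where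
  "errs_pmf e 0 = return_pmf 0"
| "errs_pmf e (Suc m) =
     do { b \<leftarrow> bernoulli_pmf (e m); c \<leftarrow> errs_pmf e m;
          return_pmf (c + (if b then 1 else 0)) }"

(* a match of m comparisons between x and y; result True iff x wins,
   i.e. x is reported smaller by the majority *)
definition match_pmf :: "(nat \<Rightarrow> real) \<Rightarrow> nat \<Rightarrow> ('a::linorder \<times> nat) \<Rightarrow> ('a \<times> nat) \<Rightarrow> bool pmf" where
  "match_pmf e m x y =
     map_pmf (\<lambda>w. if copy_less x y then 2 * w < m else 2 * w > m) (errs_pmf e m)"

(* round i: adjacent elements are paired; err i x y k is the error probability
   of the k-th comparison of the match between x and y in round i *)
fun play_round :: "nat \<Rightarrow> (nat \<Rightarrow> ('a::linorder \<times> nat) \<Rightarrow> ('a \<times> nat) \<Rightarrow> nat \<Rightarrow> real)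
                    \<Rightarrow> nat \<Rightarrow> ('a \<times> nat) list \<Rightarrow> ('a \<times> nat) list pmf" where
  "play_round c err i (x # y # rest) =
     do { w \<leftarrow> match_pmf (err i x y) (2 * c * 2 ^ i + 5) x y;
          ws \<leftarrow> play_round c err i rest;
          return_pmf ((if w then x else y) # ws) }"
| "play_round c err i xs = return_pmf []"

primrec play_rounds :: "nat \<Rightarrow> (nat \<Rightarrow> ('a::linorder \<times> nat) \<Rightarrow> ('a \<times> nat) \<Rightarrow> nat \<Rightarrow> real)
                    \<Rightarrow> nat \<Rightarrow> nat \<Rightarrow> ('a \<times> nat) list \<Rightarrow> ('a \<times> nat) list pmf" where
  "play_rounds c err i 0 xs = return_pmf xs"
| "play_rounds c err i (Suc r) xs = play_round c err i xs \<bind> play_rounds c err (Suc i) r"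

primrec sample_pmf :: "'a set \<Rightarrow> nat \<Rightarrow> 'a list pmf" where
  "sample_pmf S 0 = return_pmf []"
| "sample_pmf S (Suc m) =
     do { x \<leftarrow> pmf_of_set S; xs \<leftarrow> sample_pmf S m; return_pmf (x # xs) }"

definition tournament :: "'a::linorder set \<Rightarrow> nat \<Rightarrow> (nat \<Rightarrow> ('a \<times> nat) \<Rightarrow> ('a \<times> nat) \<Rightarrow> nat \<Rightarrow> real)
                          \<Rightarrow> nat \<Rightarrow> 'a pmf" where
  "tournament S c err k =
     do { xs \<leftarrow> sample_pmf S (2 ^ k);
          ws \<leftarrow> play_rounds c err 1 k (zip xs [0..<2 ^ k]);
          return_pmf (fst (hd ws)) }"

end

theory Submission
  imports Defs
begin

(* Call a copy large if its value is not small, and let Q r = 2^-(2^r+1). By induction on r,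
   the winner of rounds 1, ..., r among 2^r fresh samples is large with probability at most
   Q r. For r = 0 this holds because at most a quarter of S is large. A block of 2^(r+1)
   slots is won by the winner of a round-(r+1) match between the winners of its two halves,
   which are independent. That winner can be large only if both finalists are large, or if
   exactly one is and the match of 2c 2^(r+1) + 5 comparisons errs, which has probability at
   most eps = exp (-2^(r+1)). Hence the failure probability is at most
   (1 - 2 eps) Q r ^ 2 + 2 eps Q r <= 2 Q r ^ 2 = Q (r + 1). *)

lemma prob_bind_pmf:
  "measure_pmf.prob (bind_pmf M f) A = (\<integral>x. measure_pmf.prob (f x) A \<partial>M)"
proof -
  have "ennreal (measure_pmf.prob (bind_pmf M f) A) = emeasure (bind_pmf M f) A"
    by (simp add: measure_pmf.emeasure_eq_measure)
  also have "\<dots> = (\<integral>\<^sup>+x. emeasure (f x) A \<partial>M)"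
    by simp
  also have "\<dots> = (\<integral>\<^sup>+x. ennreal (measure_pmf.prob (f x) A) \<partial>M)"
    by (simp add: measure_pmf.emeasure_eq_measure)
  also have "\<dots> = ennreal (\<integral>x. measure_pmf.prob (f x) A \<partial>M)"
    by (intro nn_integral_eq_integral measure_pmf.integrable_const_bound[where B=1]) auto
  finally show ?thesis
    by (simp add: integral_nonneg_AE)
qed

lemma prob_bind_pmf_le_if:
  assumes "\<And>x. measure_pmf.prob (f x) A \<le> (if x \<in> B then a else b)"
  shows "measure_pmf.prob (bind_pmf M f) A
    \<le> a * measure_pmf.prob M B + b * (1 - measure_pmf.prob M B)"
proof -
  have "measure_pmf.prob (bind_pmf M f) A \<le> (\<integral>x. b + (a - b) * indicator B x \<partial>M)"
    unfolding prob_bind_pmf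
  proof (rule integral_mono)
    show "integrable M (\<lambda>x. measure_pmf.prob (f x) A)"
      by (rule measure_pmf.integrable_const_bound[where B=1]) auto
    show "integrable M (\<lambda>x. b + (a - b) * indicator B x)"
      by (rule measure_pmf.integrable_const_bound[where B="\<bar>b\<bar> + \<bar>a - b\<bar>"])
         (auto simp: indicator_def)
    fix x
    show "measure_pmf.prob (f x) A \<le> b + (a - b) * indicator B x"
      using assms[of x] by (auto simp: indicator_def)
  qed
  also have "\<dots> = b + (a - b) * measure_pmf.prob M B"
  proof -
    have "integrable M (indicator B :: _ \<Rightarrow> real)"
      by (rule measure_pmf.integrable_const_bound[where B=1]) (auto simp: indicator_def)
    then show ?thesis by (subst Bochner_Integration.integral_add) auto
  qed
  also have "\<dots> = a * measure_pmf.prob M B + b * (1 - measure_pmf.prob M B)"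
    by (simp add: algebra_simps)
  finally show ?thesis .
qed

lemma prob_bind_pmf_duel_le:
  fixes U V :: "'b pmf" and f :: "'b \<Rightarrow> 'b \<Rightarrow> 'b pmf"
  assumes U: "measure_pmf.prob U B \<le> Q" and V: "measure_pmf.prob V B \<le> Q"
    and \<epsilon>: "0 \<le> \<epsilon>" "\<epsilon> \<le> 1/2"
    and f: "\<And>u v. measure_pmf.prob (f u v) B \<le>
              (if u \<in> B \<and> v \<in> B then 1 else if u \<in> B \<or> v \<in> B then \<epsilon> else 0)"
  shows "measure_pmf.prob (bind_pmf U (\<lambda>u. bind_pmf V (f u))) B
    \<le> (1 - 2 * \<epsilon>) * Q\<^sup>2 + 2 * \<epsilon> * Q"
proof -
  define q q' where "q = measure_pmf.prob U B" and "q' = measure_pmf.prob V B"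
  have "measure_pmf.prob (bind_pmf V (f u)) B
      \<le> (if u \<in> B then q' + \<epsilon> * (1 - q') else \<epsilon> * q')" for u
  proof -
    have "measure_pmf.prob (bind_pmf V (f u)) B
        \<le> (if u \<in> B then 1 else \<epsilon>) * q' + (if u \<in> B then \<epsilon> else 0) * (1 - q')"
      unfolding q'_def
    proof (rule prob_bind_pmf_le_if)
      fix v
      show "measure_pmf.prob (f u v) B
          \<le> (if v \<in> B then if u \<in> B then 1 else \<epsilon> else if u \<in> B then \<epsilon> else 0)"
        using f[of u v] by auto
    qed
    then show ?thesis by (cases "u \<in> B") simp_all
  qed
  then have "measure_pmf.prob (bind_pmf U (\<lambda>u. bind_pmf V (f u))) B
      \<le> (q' + \<epsilon> * (1 - q')) * q + \<epsilon> * q' * (1 - q)"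
    unfolding q_def by (rule prob_bind_pmf_le_if)
  also have "\<dots> = (1 - 2 * \<epsilon>) * (q * q') + \<epsilon> * (q + q')"
    by (simp add: algebra_simps)
  also have "\<dots> \<le> (1 - 2 * \<epsilon>) * (Q * Q) + \<epsilon> * (Q + Q)"
    using U V \<epsilon> measure_nonneg[of U B] measure_nonneg[of V B] order_trans[OF measure_nonneg U]
    unfolding q_def q'_def
    by (intro add_mono mult_left_mono mult_mono) auto
  finally show ?thesis
    by (simp add: power2_eq_square algebra_simps)
qed

lemma exp_2_ge_6: "6 \<le> exp (2::real)"
proof -
  have "5/2 \<le> exp (1::real)"
    using exp_lower_Taylor_quadratic[of 1] by simp
  then have "5/2 * (5/2) \<le> exp (1::real) * exp 1"
    by (intro mult_mono) auto
  then show ?thesis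
    by (simp flip: exp_add)
qed

lemma doubling_step_le:
  fixes x :: nat and \<epsilon> :: real
  assumes "1 \<le> x" and "0 \<le> \<epsilon>" and "\<epsilon> \<le> exp (- (2 * x))"
  defines "Q \<equiv> 1 / 2 ^ (x + 1)"
  shows "(1 - 2 * \<epsilon>) * Q\<^sup>2 + 2 * \<epsilon> * Q \<le> 1 / 2 ^ (2 * x + 1)"
proof -
  have Q: "0 < Q" "Q \<le> 1/4"
    using power_increasing[of 2 "x + 1" "2::real"] assms(1) by (auto simp: Q_def)
  have "\<epsilon> \<le> 1 / exp 2 ^ x"
    using assms(3)
    by (simp add: exp_minus exp_of_nat_mult[symmetric] mult.commute inverse_eq_divide)
  also have "\<dots> \<le> 1 / 6 ^ x"
    using exp_2_ge_6 by (intro divide_left_mono power_mono) auto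
  finally have \<epsilon>_le: "\<epsilon> \<le> 1 / 6 ^ x" .
  have "4 * (1 - Q) \<le> 3 ^ x"
  proof (cases "x = 1")
    case True
    then show ?thesis by (simp add: Q_def)
  next
    case False
    then have "(3::real) ^ 2 \<le> 3 ^ x"
      using assms(1) by (intro power_increasing) auto
    then show ?thesis using Q by simp
  qed
  then have "2 * \<epsilon> * (1 - Q) \<le> 2 * (1 / 6 ^ x) * (1 - Q)"
    using \<epsilon>_le Q by (intro mult_right_mono) auto
  also have "\<dots> = 4 * (1 - Q) / (2 * 6 ^ x)"
    by (simp add: field_simps)
  also have "\<dots> \<le> 3 ^ x / (2 * 6 ^ x)"
    using \<open>4 * (1 - Q) \<le> 3 ^ x\<close> by (intro divide_right_mono) auto
  also have "\<dots> = Q"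
    using power_mult_distrib[of "3::real" 2 x] by (simp add: Q_def)
  finally have "2 * \<epsilon> * (1 - Q) \<le> Q" .
  have "(1 - 2 * \<epsilon>) * Q\<^sup>2 + 2 * \<epsilon> * Q = Q * Q + Q * (2 * \<epsilon> * (1 - Q))"
    by (simp add: power2_eq_square algebra_simps)
  also have "\<dots> \<le> Q * Q + Q * Q"
    using \<open>2 * \<epsilon> * (1 - Q) \<le> Q\<close> Q by (intro add_left_mono mult_left_mono) auto
  also have "\<dots> = 1 / 2 ^ (2 * x + 1)"
    by (simp add: Q_def power_add power_mult power2_eq_square field_simps flip: mult_2)
  finally show ?thesis .
qed

lemma length_play_round:
  "ws \<in> set_pmf (play_round c err i xs) \<Longrightarrow> length ws = length xs div 2"
  by (induction c err i xs arbitrary: ws rule: play_round.induct) auto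

lemma length_play_rounds:
  "ws \<in> set_pmf (play_rounds c err i r xs) \<Longrightarrow> length ws = length xs div 2 ^ r"
  by (induction r arbitrary: i xs) (auto dest!: length_play_round simp: div_mult2_eq)

lemma play_round_append:
  "even (length xs) \<Longrightarrow> play_round c err i (xs @ ys) =
     do { as \<leftarrow> play_round c err i xs; bs \<leftarrow> play_round c err i ys; return_pmf (as @ bs) }"
  by (induction xs rule: induct_list012) (simp_all add: bind_assoc_pmf bind_return_pmf bind_return_pmf')

lemma play_rounds_append:
  "2 ^ r dvd length xs \<Longrightarrow> play_rounds c err i r (xs @ ys) =
     do { as \<leftarrow> play_rounds c err i r xs; bs \<leftarrow> play_rounds c err i r ys; return_pmf (as @ bs) }"
proof (induction r arbitrary: i xs ys)
  case 0
  then show ?case by (simp add: bind_return_pmf)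
next
  case (Suc r)
  let ?R = "play_round c err i" and ?Rs = "play_rounds c err (Suc i) r"
  have "even (length xs)"
    using Suc.prems by (auto intro: dvd_trans[rotated])
  then have "play_rounds c err i (Suc r) (xs @ ys) =
      do { as \<leftarrow> ?R xs; bs \<leftarrow> ?R ys; ?Rs (as @ bs) }"
    by (simp add: play_round_append bind_assoc_pmf bind_return_pmf)
  also have "\<dots> = do { as \<leftarrow> ?R xs; bs \<leftarrow> ?R ys;
      as' \<leftarrow> ?Rs as; bs' \<leftarrow> ?Rs bs; return_pmf (as' @ bs') }"
  proof (intro bind_pmf_cong refl)
    fix as bs assume "as \<in> set_pmf (?R xs)"
    then have "2 ^ r dvd length as"
      using Suc.prems by (auto dest!: length_play_round intro: div_dvd_div[of 2, simplified])
    then show "?Rs (as @ bs) = do { as' \<leftarrow> ?Rs as; bs' \<leftarrow> ?Rs bs; return_pmf (as' @ bs') }"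
      by (rule Suc.IH)
  qed
  also have "\<dots> = do { as \<leftarrow> ?R xs; as' \<leftarrow> ?Rs as;
      bs \<leftarrow> ?R ys; bs' \<leftarrow> ?Rs bs; return_pmf (as' @ bs') }"
    by (rule bind_pmf_cong[OF refl], rule bind_commute_pmf)
  finally show ?case
    by (simp add: bind_assoc_pmf)
qed

lemma play_rounds_Suc_right:
  "play_rounds c err i (Suc r) xs = play_rounds c err i r xs \<bind> play_round c err (i + r)"
proof (induction r arbitrary: i xs)
  case 0
  have "play_rounds c err j 0 = return_pmf" for j
    by (rule ext) simp
  then show ?case
    by (simp add: bind_return_pmf bind_return_pmf')
next
  case (Suc r)
  have "play_rounds c err (Suc i) (Suc r) =
      (\<lambda>ys. play_rounds c err (Suc i) r ys \<bind> play_round c err (i + Suc r))"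
    using Suc.IH by auto
  then show ?case
    by (simp add: bind_assoc_pmf)
qed

definition match_winner_pmf ::
    "nat \<Rightarrow> (nat \<Rightarrow> ('a::linorder \<times> nat) \<Rightarrow> ('a \<times> nat) \<Rightarrow> nat \<Rightarrow> real) \<Rightarrow> nat
      \<Rightarrow> ('a \<times> nat) \<Rightarrow> ('a \<times> nat) \<Rightarrow> ('a \<times> nat) pmf" where
  "match_winner_pmf c err i x y =
     map_pmf (\<lambda>b. if b then x else y) (match_pmf (err i x y) (2 * c * 2 ^ i + 5) x y)"

lemma map_hd_play_round_pair:
  "map_pmf hd (play_round c err i [x, y]) = match_winner_pmf c err i x y"
  by (simp add: match_winner_pmf_def map_pmf_def bind_assoc_pmf bind_return_pmf)

lemma map_hd_play_rounds_Suc_append: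
  assumes "length xs = 2 ^ r" and "length ys = 2 ^ r"
  shows "map_pmf hd (play_rounds c err i (Suc r) (xs @ ys)) =
    do { u \<leftarrow> map_pmf hd (play_rounds c err i r xs); v \<leftarrow> map_pmf hd (play_rounds c err i r ys);
         match_winner_pmf c err (i + r) u v }"
proof -
  let ?Rs = "play_rounds c err i r"
  have singleton: "as = [hd as]" if "as \<in> set_pmf (?Rs zs)" "length zs = 2 ^ r" for as zs
    using length_play_rounds[OF that(1)] that(2) by (cases as) auto
  have "map_pmf hd (play_rounds c err i (Suc r) (xs @ ys)) =
      do { as \<leftarrow> ?Rs xs; bs \<leftarrow> ?Rs ys; map_pmf hd (play_round c err (i + r) (as @ bs)) }"
    using assms(1)
    by (simp add: play_rounds_Suc_right play_rounds_append map_bind_pmf bind_assoc_pmf bind_return_pmf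
        del: play_rounds.simps)
  also have "\<dots> = do { as \<leftarrow> ?Rs xs; bs \<leftarrow> ?Rs ys; match_winner_pmf c err (i + r) (hd as) (hd bs) }"
  proof (intro bind_pmf_cong refl)
    fix as bs assume "as \<in> set_pmf (?Rs xs)" "bs \<in> set_pmf (?Rs ys)"
    then have "as @ bs = [hd as, hd bs]"
      using singleton assms by (metis append_Cons append_Nil)
    then show "map_pmf hd (play_round c err (i + r) (as @ bs)) =
        match_winner_pmf c err (i + r) (hd as) (hd bs)"
      by (simp only: map_hd_play_round_pair)
  qed
  finally show ?thesis
    by (simp add: bind_map_pmf)
qed

lemma sample_pmf_add:
  "sample_pmf S (a + b) =
     do { xs \<leftarrow> sample_pmf S a; ys \<leftarrow> sample_pmf S b; return_pmf (xs @ ys) }"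
  by (induction a) (simp_all add: bind_return_pmf bind_return_pmf' bind_assoc_pmf)

lemma length_sample_pmf: "xs \<in> set_pmf (sample_pmf S m) \<Longrightarrow> length xs = m"
  by (induction m arbitrary: xs) auto

definition winner_pmf ::
    "'a::linorder set \<Rightarrow> nat \<Rightarrow> (nat \<Rightarrow> ('a \<times> nat) \<Rightarrow> ('a \<times> nat) \<Rightarrow> nat \<Rightarrow> real) \<Rightarrow> nat
      \<Rightarrow> nat list \<Rightarrow> ('a \<times> nat) pmf" where
  "winner_pmf S c err r slots =
     sample_pmf S (2 ^ r) \<bind> (\<lambda>xs. map_pmf hd (play_rounds c err 1 r (zip xs slots)))"

lemma winner_pmf_Suc:
  assumes "length slots = 2 ^ r" and "length slots' = 2 ^ r"
  shows "winner_pmf S c err (Suc r) (slots @ slots') =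
    do { u \<leftarrow> winner_pmf S c err r slots; v \<leftarrow> winner_pmf S c err r slots';
         match_winner_pmf c err (Suc r) u v }"
proof -
  let ?smp = "sample_pmf S (2 ^ r)"
  let ?W = "\<lambda>xs sl. map_pmf hd (play_rounds c err 1 r (zip xs sl))"
  have "winner_pmf S c err (Suc r) (slots @ slots') = do { xs \<leftarrow> ?smp; ys \<leftarrow> ?smp;
      map_pmf hd (play_rounds c err 1 (Suc r) (zip (xs @ ys) (slots @ slots'))) }"
    by (simp add: winner_pmf_def mult_2 sample_pmf_add bind_assoc_pmf bind_return_pmf
        del: play_rounds.simps)
  also have "\<dots> = do { xs \<leftarrow> ?smp; ys \<leftarrow> ?smp; u \<leftarrow> ?W xs slots; v \<leftarrow> ?W ys slots';
      match_winner_pmf c err (Suc r) u v }"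
    using assms
    by (intro bind_pmf_cong refl)
       (simp add: map_hd_play_rounds_Suc_append length_sample_pmf del: play_rounds.simps)
  also have "\<dots> = do { xs \<leftarrow> ?smp; u \<leftarrow> ?W xs slots; ys \<leftarrow> ?smp; v \<leftarrow> ?W ys slots';
      match_winner_pmf c err (Suc r) u v }"
    by (rule bind_pmf_cong[OF refl], rule bind_commute_pmf)
  finally show ?thesis
    by (simp add: winner_pmf_def bind_assoc_pmf)
qed

lemma tournament_eq_map_winner_pmf:
  "tournament S c err k = map_pmf fst (winner_pmf S c err k [0..<2 ^ k])"
  by (simp add: tournament_def winner_pmf_def map_pmf_def bind_assoc_pmf bind_return_pmf)

definition large :: "'a::linorder set \<Rightarrow> ('a \<times> nat) set" where
  "large S = {z. \<not> small S (fst z)}"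

lemma small_le: "finite S \<Longrightarrow> y \<le> x \<Longrightarrow> small S x \<Longrightarrow> small S y"
proof -
  assume "finite S" "y \<le> x" "small S x"
  then have "rank S y \<le> rank S x"
    unfolding rank_def by (intro card_mono) auto
  with \<open>small S x\<close> show "small S y"
    unfolding small_def by linarith
qed

lemma card_not_small_le:
  assumes "finite S"
  shows "4 * card {x \<in> S. \<not> small S x} \<le> card S"
proof (cases "{x \<in> S. \<not> small S x} = {}")
  case False
  define L where "L = {x \<in> S. \<not> small S x}"
  define y where "y = Min L"
  have "finite L" "L \<subseteq> S"
    using assms by (auto simp: L_def)
  have "y \<in> L"
    unfolding y_def using Min_in[OF \<open>finite L\<close>] False L_def by blast
  have "{z \<in> S. z < y} \<subseteq> S - L"
    using Min_le[OF \<open>finite L\<close>] by (force simp: y_def)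
  then have "rank S y \<le> card S - card L"
    unfolding rank_def using assms \<open>L \<subseteq> S\<close> \<open>finite L\<close>
    by (metis (no_types, lifting) card_Diff_subset card_mono finite_Diff)
  moreover have "3 / 4 * card S < rank S y" and "card L \<le> card S"
    using \<open>y \<in> L\<close> \<open>L \<subseteq> S\<close> assms by (auto simp: L_def small_def card_mono)
  ultimately show ?thesis
    unfolding L_def[symmetric] by linarith
qed (simp only: card.empty mult_0_right le0)

lemma prob_winner_pmf_0_large:
  assumes "finite S" and "S \<noteq> {}" and "length slots = 1"
  shows "measure_pmf.prob (winner_pmf S c err 0 slots) (large S) \<le> 1 / 4"
proof -
  obtain s where "slots = [s]"
    using assms(3) by (cases slots) auto
  then have "winner_pmf S c err 0 slots = map_pmf (\<lambda>x. (x, s)) (pmf_of_set S)"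
    by (simp add: winner_pmf_def map_pmf_def bind_assoc_pmf bind_return_pmf)
  then have "measure_pmf.prob (winner_pmf S c err 0 slots) (large S) =
      card {x \<in> S. \<not> small S x} / card S"
    using assms(1,2) by (simp add: large_def measure_pmf_of_set vimage_def Int_def)
  also have "\<dots> \<le> 1 / 4"
    using card_not_small_le[OF assms(1)] assms(1,2) by (simp add: card_gt_0_iff field_simps)
  finally show ?thesis .
qed

lemma prob_match_pmf_wrong:
  assumes "odd m"
  shows "measure_pmf.prob (match_pmf e m x y) {b. b \<noteq> copy_less x y} =
    1 - measure_pmf.prob (errs_pmf e m) {w. 2 * w < m}"
proof -
  have "m < 2 * w \<longleftrightarrow> \<not> 2 * w < m" for w
    using assms by presburger
  then have "{w. (if copy_less x y then 2 * w < m else m < 2 * w) \<noteq> copy_less x y} =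
      UNIV - {w. 2 * w < m}"
    by auto
  then show ?thesis
    using measure_pmf.prob_compl[of "{w. 2 * w < m}" "errs_pmf e m"]
    by (simp add: match_pmf_def vimage_def)
qed

lemma prob_match_pmf_wrong_le:
  fixes e :: "nat \<Rightarrow> real"
  assumes "c > 0"
    and majority: "\<forall>(t::real) (m::nat) (e::nat \<Rightarrow> real). t \<ge> 0 \<longrightarrow> real m = 2 * real c * t + 1 \<longrightarrow>
           (\<forall>j. 0 \<le> e j \<and> e j \<le> p) \<longrightarrow>
           measure_pmf.prob (errs_pmf e m) {w. 2 * w < m} \<ge> 1 - exp (- t)"
    and "\<forall>j. 0 \<le> e j \<and> e j \<le> p"
  shows "measure_pmf.prob (match_pmf e (2 * c * 2 ^ i + 5) x y) {b. b \<noteq> copy_less x y}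
    \<le> exp (- (2 ^ i))"
proof -
  define m where "m = 2 * c * 2 ^ i + 5"
  define t :: real where "t = 2 ^ i + 2 / c"
  have "t \<ge> 0" and "real m = 2 * real c * t + 1"
    using assms(1) by (simp_all add: m_def t_def field_simps)
  then have "1 - exp (- t) \<le> measure_pmf.prob (errs_pmf e m) {w. 2 * w < m}"
    using majority assms(3) by blast
  have "measure_pmf.prob (match_pmf e m x y) {b. b \<noteq> copy_less x y} =
      1 - measure_pmf.prob (errs_pmf e m) {w. 2 * w < m}"
    by (rule prob_match_pmf_wrong) (simp add: m_def)
  also have "\<dots> \<le> exp (- t)"
    using \<open>1 - exp (- t) \<le> _\<close> by linarith
  also have "\<dots> \<le> exp (- (2 ^ i))"
    by (simp add: t_def)
  finally show ?thesis
    unfolding m_def .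
qed

lemma prob_match_winner_pmf_large:
  assumes "finite S"
    and wrong: "measure_pmf.prob (match_pmf (err i u v) (2 * c * 2 ^ i + 5) u v)
                  {b. b \<noteq> copy_less u v} \<le> \<epsilon>"
  shows "measure_pmf.prob (match_winner_pmf c err i u v) (large S) \<le>
    (if u \<in> large S \<and> v \<in> large S then 1 else if u \<in> large S \<or> v \<in> large S then \<epsilon> else 0)"
proof -
  have winner: "measure_pmf.prob (match_winner_pmf c err i u v) (large S) =
      measure_pmf.prob (match_pmf (err i u v) (2 * c * 2 ^ i + 5) u v)
        {b. (if b then u else v) \<in> large S}"
    by (simp add: match_winner_pmf_def vimage_def)
  consider "u \<in> large S \<and> v \<in> large S" | "u \<notin> large S \<and> v \<notin> large S"
    | "(u \<in> large S) \<noteq> (v \<in> large S)"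
    by blast
  then show ?thesis
  proof cases
    case 2
    then have "{b. (if b then u else v) \<in> large S} = {}"
      by auto
    with 2 show ?thesis
      by (simp add: winner)
  next
    case 3
    have fst_less: "fst x < fst y" if "x \<notin> large S" "y \<in> large S" for x y
      using that small_le[OF assms(1), of "fst y" "fst x"] by (auto simp: large_def not_le[symmetric])
    have "copy_less u v \<longleftrightarrow> v \<in> large S"
      using 3 fst_less[of u v] fst_less[of v u] by (auto simp: copy_less_def)
    with 3 have "{b. (if b then u else v) \<in> large S} = {b. b \<noteq> copy_less u v}"
      by auto
    with 3 wrong show ?thesis
      by (simp add: winner)
  qed simp
qed

lemma prob_winner_pmf_large:
  fixes S :: "'a::linorder set" and err :: "nat \<Rightarrow> ('a \<times> nat) \<Rightarrow> ('a \<times> nat) \<Rightarrow> nat \<Rightarrow> real"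
  assumes "finite S" and "S \<noteq> {}" and "c > 0"
    and majority: "\<forall>(t::real) (m::nat) (e::nat \<Rightarrow> real). t \<ge> 0 \<longrightarrow> real m = 2 * real c * t + 1 \<longrightarrow>
           (\<forall>j. 0 \<le> e j \<and> e j \<le> p) \<longrightarrow>
           measure_pmf.prob (errs_pmf e m) {w. 2 * w < m} \<ge> 1 - exp (- t)"
    and "\<forall>i x y j. 0 \<le> err i x y j \<and> err i x y j \<le> p"
  shows "length slots = 2 ^ r \<Longrightarrow>
    measure_pmf.prob (winner_pmf S c err r slots) (large S) \<le> 1 / 2 ^ (2 ^ r + 1)"
proof (induction r arbitrary: slots)
  case 0
  then show ?case
    using prob_winner_pmf_0_large[OF assms(1,2)] by simp
next
  case (Suc r)
  define \<epsilon> :: real where "\<epsilon> = exp (- (2 ^ Suc r))"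
  define slots1 slots2 where "slots1 = take (2 ^ r) slots" and "slots2 = drop (2 ^ r) slots"
  have len: "length slots1 = 2 ^ r" "length slots2 = 2 ^ r"
    using Suc.prems by (simp_all add: slots1_def slots2_def)
  have "2 \<le> exp ((2::real) ^ Suc r)"
    using exp_ge_add_one_self[of "2 ^ Suc r"] one_le_power[of "2::real" "Suc r"] by linarith
  then have \<epsilon>: "0 \<le> \<epsilon>" "\<epsilon> \<le> 1 / 2"
    by (simp_all add: \<epsilon>_def exp_minus inverse_eq_divide)
  have match: "measure_pmf.prob (match_winner_pmf c err (Suc r) u v) (large S) \<le>
      (if u \<in> large S \<and> v \<in> large S then 1 else if u \<in> large S \<or> v \<in> large S then \<epsilon> else 0)"
    for u v
  proof (rule prob_match_winner_pmf_large[OF assms(1)])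
    show "measure_pmf.prob (match_pmf (err (Suc r) u v) (2 * c * 2 ^ Suc r + 5) u v)
        {b. b \<noteq> copy_less u v} \<le> \<epsilon>"
      unfolding \<epsilon>_def
      by (rule prob_match_pmf_wrong_le[OF assms(3) majority]) (use assms(5) in blast)
  qed
  have "slots = slots1 @ slots2"
    by (simp add: slots1_def slots2_def)
  then have "measure_pmf.prob (winner_pmf S c err (Suc r) slots) (large S)
      \<le> (1 - 2 * \<epsilon>) * (1 / 2 ^ (2 ^ r + 1))\<^sup>2 + 2 * \<epsilon> * (1 / 2 ^ (2 ^ r + 1))"
    using prob_bind_pmf_duel_le[OF Suc.IH[OF len(1)] Suc.IH[OF len(2)] \<epsilon> match]
    by (simp only: winner_pmf_Suc[OF len])
  also have "\<dots> \<le> 1 / 2 ^ (2 * 2 ^ r + 1)"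
    using \<epsilon>(1) by (intro doubling_step_le) (auto simp: \<epsilon>_def)
  finally show ?case
    by simp
qed

theorem lemma8:
  fixes S :: "'a::linorder set" and N n k c :: nat and p :: real
    and err :: "nat \<Rightarrow> ('a \<times> nat) \<Rightarrow> ('a \<times> nat) \<Rightarrow> nat \<Rightarrow> real"
  assumes "finite S" and "S \<noteq> {}" and "card S = N"
    and "n = 2 ^ k"
    and "0 \<le> p" and "p < 1/2"
    and "c > 0"
    and "\<forall>(t::real) (m::nat) (e::nat \<Rightarrow> real). t \<ge> 0 \<longrightarrow> real m = 2 * real c * t + 1 \<longrightarrow>
           (\<forall>j. 0 \<le> e j \<and> e j \<le> p) \<longrightarrow>
           measure_pmf.prob (errs_pmf e m) {w. 2 * w < m} \<ge> 1 - exp (- t)"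
    and "\<forall>i x y j. 0 \<le> err i x y j \<and> err i x y j \<le> p"
  shows "measure_pmf.prob (tournament S c err k) {w. small S w} \<ge> 1 - 1 / 2 ^ (n + 1)"
proof -
  let ?W = "winner_pmf S c err k [0..<2 ^ k]"
  have "measure_pmf.prob (tournament S c err k) {w. small S w} =
      measure_pmf.prob ?W (UNIV - large S)"
    by (simp add: tournament_eq_map_winner_pmf large_def vimage_def set_diff_eq)
  also have "\<dots> = 1 - measure_pmf.prob ?W (large S)"
    using measure_pmf.prob_compl[of "large S" ?W] by simp
  finally show ?thesis
    using prob_winner_pmf_large[OF assms(1,2,7,8,9), of "[0..<2 ^ k]" k] assms(4) by simp
qed

end
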